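(* Let $X$ be a Fr\'echet space with translation-invariant metric $d$, let $\mathfrak F\subseteq\mathfrak S$, and let $X_1\subseteq X_2\subseteq\cdots$ be an increasing sequence of linear subspaces of $X$ such that $(\rho,X_n)\in\operatorname{Sat}_u(\mathfrak F)$ for every $n$ and $\bigcup_nX_n$ is dense in $X$. Then $\mathbb D(\mathfrak F)$ is approximately controllable on $X$ (i.e. $\overline{A_{\mathbb D(\mathfrak F)}(u,t)}=X$ for all $u\in X$, $t>0$), and for every continuous linear projection $\pi:X\to X$ onto a finite-dimensional subspace, for all $u,v\in X$ and $t,\varepsilon>0$ there exist $\Psi^1,\dots,\Psi^n\in\mathbb D(\mathfrak F)$ and $t_1,\dots,t_n>0$ with $\sum t_i=t$, $\pi(\Psi^n_{t_n}\cdots\Psi^1_{t_1}u)=\pi(v)$ and $d(\Psi^n_{t_n}\cdots\Psi^1_{t_1}u,v)<\varepsilon$.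
   Context: $\dagger\notin X$ is an extra point and $(Y,d_Y)$ an auxiliary metric space (here one may take $Y=X$). For nonempty $Z\subseteq Y$, a one-parameter family of continuous local semigroups on $X$ parametrized by $Z$ is a map $(t,u,p)\mapsto\Phi^p_tu:[0,\infty)\times X\times Z\to X\cup\{\dagger\}$ such that for every $u,p$ there is $T_{u,p}>0$ with: (i) $\Phi^p_tu\in X$ for $t<T_{u,p}$ and $=\dagger$ otherwise; (ii) $\Phi^p_0u=u$ and $\Phi^p_{t+s}u=\Phi^p_t\Phi^p_su$ (with $t<T_{\Phi^p_su,p}$) whenever $s+t<T_{u,p}$; (iii) joint continuity: for $t<T_{u,p}$, $\varepsilon>0$ there is $\delta>0$ with $|t-t'|+d(u,u')+d_Y(p,p')<\delta\Rightarrow t'<T_{u',p'}$ and $d(\Phi^p_tu,\Phi^{p'}_{t'}u')<\varepsilon$. $\mathfrak S$ is the set of all such, $\mathcal P(\Phi)$ the parameter set, $\mathbb D(\mathfrak F)=\{\Phi^p:\Phi\in\mathfrak F,p\in\mathcal P(\Phi)\}$. Compositions only considered when defined in $X$. $A_{\mathcal F}(u,t)=\{\Phi^n_{t_n}\cdots\Phi^1_{t_1}u:\Phi^j\in\mathcal F,t_j>0,\sum t_j=t\}$. For a linear subspace $Y'\subseteq X$, $(\rho,Y')$ is the ray semigroup family $\rho^p_tu=u+tp$, $p\in Y'$. Uniform subsumption $\mathfrak F\preccurlyeq_u\mathfrak G$: for every $\Psi\in\mathfrak F$, $t,\varepsilon>0$, compact $K_1\subseteq X$, $K_2\subseteq\mathcal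 P(\Psi)$, there exist $\Phi^1,\dots,\Phi^n\in\mathfrak G$, $t_k>0$ with $\sum t_k\le t$ and continuous $f_k:K_2\to\mathcal P(\Phi^k)$ with $\sup_{u\in K_1,p\in K_2}d(\Psi^p_tu,\Phi^{n,f_n(p)}_{t_n}\cdots\Phi^{1,f_1(p)}_{t_1}u)<\varepsilon$. $\operatorname{Sat}_u(\mathfrak F)=\bigcup_{\mathfrak G\preccurlyeq_u\mathfrak F}\mathfrak G$. *)

theory Defs
  imports "HOL-Analysis.Analysis"
begin

text \<open>Frechet space: a complete metric real vector space whose metric is
translation invariant, with jointly continuous scalar multiplication, and
locally convex (addition is continuous by translation invariance).\<close>

definition frechet_space :: "'a::{real_vector, complete_space} itself \<Rightarrow> bool" where
  "frechet_space (_ :: 'a itself) \<longleftrightarrow>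
     (\<forall>x y z :: 'a. dist (x + z) (y + z) = dist x y) \<and>
     continuous_on UNIV (\<lambda>q::real \<times> 'a. fst q *\<^sub>R snd q) \<and>
     (\<forall>U :: 'a set. open U \<and> 0 \<in> U \<longrightarrow> (\<exists>V. open V \<and> convex V \<and> 0 \<in> V \<and> V \<subseteq> U))"

text \<open>A one-parameter family of local semigroups parametrized by Z (a subset of
the auxiliary space Y = X) is a pair (Phi, Z); Phi t u p = None encodes the extra
point dagger.\<close>

type_synonym 'a family = "(real \<Rightarrow> 'a \<Rightarrow> 'a \<Rightarrow> 'a option) \<times> 'a set"
type_synonym 'a semigroup = "real \<Rightarrow> 'a \<Rightarrow> 'a option"

definition is_family :: "'a::metric_space family \<Rightarrow> bool" where
  "is_family F \<longleftrightarrow> (case F of (\<Phi>, Z) \<Rightarrow>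
     Z \<noteq> {} \<and>
     (\<forall>t u p. (t < 0 \<or> p \<notin> Z) \<longrightarrow> \<Phi> t u p = None) \<and>
     \<comment> \<open>(i) maximal existence time T in (0, infinity]\<close>
     (\<forall>u. \<forall>p\<in>Z. \<exists>T::ereal. T > 0 \<and> (\<forall>t\<ge>0. \<Phi> t u p \<noteq> None \<longleftrightarrow> ereal t < T)) \<and>
     \<comment> \<open>(ii) semigroup property\<close>
     (\<forall>u. \<forall>p\<in>Z. \<Phi> 0 u p = Some u) \<and>
     (\<forall>u. \<forall>p\<in>Z. \<forall>s\<ge>0. \<forall>t\<ge>0. \<Phi> (s + t) u p \<noteq> None \<longrightarrow>
        (\<exists>w. \<Phi> s u p = Some w \<and> \<Phi> t w p = \<Phi> (s + t) u p)) \<and>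
     \<comment> \<open>(iii) joint continuity\<close>
     (\<forall>t u. \<forall>p\<in>Z. \<forall>x. t \<ge> 0 \<and> \<Phi> t u p = Some x \<longrightarrow>
        (\<forall>\<epsilon>>0. \<exists>\<delta>>0. \<forall>t'\<ge>0. \<forall>u'. \<forall>p'\<in>Z.
           \<bar>t - t'\<bar> + dist u u' + dist p p' < \<delta> \<longrightarrow>
           (\<exists>x'. \<Phi> t' u' p' = Some x' \<and> dist x x' < \<epsilon>))))"

definition SG :: "'a::metric_space family set" where
  "SG = {F. is_family F}"

definition params :: "'a family \<Rightarrow> 'a set" where
  "params F = snd F"

definition DD :: "'a family set \<Rightarrow> 'a semigroup set" where
  "DD \<FF> = {(\<lambda>t u. \<Phi> t u p) | \<Phi> Z p. (\<Phi>, Z) \<in> \<FF> \<and> p \<in> Z}"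

fun apply_seq :: "('a semigroup \<times> real) list \<Rightarrow> 'a \<Rightarrow> 'a option" where
  "apply_seq [] u = Some u"
| "apply_seq ((\<Psi>, t) # rest) u =
     (case \<Psi> t u of None \<Rightarrow> None | Some w \<Rightarrow> apply_seq rest w)"

definition attainable :: "'a semigroup set \<Rightarrow> 'a \<Rightarrow> real \<Rightarrow> 'a set" where
  "attainable \<D> u t = {v. \<exists>L. L \<noteq> [] \<and> (\<forall>(\<Psi>, s)\<in>set L. \<Psi> \<in> \<D> \<and> s > 0) \<and>
       sum_list (map snd L) = t \<and> apply_seq L u = Some v}"

definition approx_controllable :: "'a::topological_space semigroup set \<Rightarrow> bool" where
  "approx_controllable \<D> \<longleftrightarrow> (\<forall>u. \<forall>t>0. closure (attainable \<D> u t) = UNIV)"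

definition ray :: "'a::real_vector set \<Rightarrow> 'a family" where
  "ray Y' = ((\<lambda>t u p. if t \<ge> 0 \<and> p \<in> Y' then Some (u + t *\<^sub>R p) else None), Y')"

text \<open>Uniform subsumption F \<preccurlyeq>_u G. A list entry ((Phi,Z), t_k, f_k)
stands for Phi^k with time t_k and parameter map f_k : K2 \<rightarrow> Z.\<close>
definition usub :: "'a::metric_space family set \<Rightarrow> 'a family set \<Rightarrow> bool" where
  "usub \<FF> \<GG> \<longleftrightarrow>
    (\<forall>(\<Psi>, Z\<Psi>)\<in>\<FF>. \<forall>t>0. \<forall>\<epsilon>>0. \<forall>K1 K2. compact K1 \<and> compact K2 \<and> K2 \<subseteq> Z\<Psi> \<longrightarrow>
      (\<exists>L :: ('a family \<times> real \<times> ('a \<Rightarrow> 'a)) list.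
         L \<noteq> [] \<and>
         (\<forall>((\<Phi>, Z), s, f)\<in>set L. (\<Phi>, Z) \<in> \<GG> \<and> s > 0 \<and>
              continuous_on K2 f \<and> f ` K2 \<subseteq> Z) \<and>
         sum_list (map (\<lambda>(_, s, _). s) L) \<le> t \<and>
         (\<exists>c<\<epsilon>. \<forall>u\<in>K1. \<forall>p\<in>K2. \<exists>x w.
            \<Psi> t u p = Some x \<and>
            apply_seq (map (\<lambda>((\<Phi>, Z), s, f). ((\<lambda>r v. \<Phi> r v (f p)), s)) L) u = Some w \<and>
            dist x w \<le> c)))"

definition Sat_u :: "'a::metric_space family set \<Rightarrow> 'a family set" where
  "Sat_u \<FF> = \<Union>{\<GG>. \<GG> \<subseteq> SG \<and> usub \<GG> \<FF>}"

end

theory Submission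
  imports Defs "HOL-Homology.Homology"
begin

text \<open>Ray saturation says that the translations u \<mapsto> u + s p, p \<in> X_n, are approximated, uniformly on
  compact sets of starting points and parameters, by compositions of semigroups of D(F) whose
  parameters depend continuously on p. With the density of the union of the X_n this steers any u
  close to any v; the total time is made exact by alternating short free evolutions with corrective
  ray steps. For the projection \<pi>, one reaches, continuously in x from a small coordinate ball of the
  finite-dimensional range of \<pi>, approximations of v + \<Sigma> x_i b_i. In coordinates, x \<mapsto> \<pi>(endpoint) - \<pi> v
  is then a small perturbation of x, so it has a zero by a Brouwer-type argument, the
  non-contractibility of spheres.\<close>

section \<open>Balls and spheres in coordinate space\<close>

text \<open>As in Euclidean_space, R^m is represented by the functions nat \<Rightarrow> real vanishing from
  index m on, so that the dimension may depend on the data; the Euclidean norm is L2_set x {..<m}.\<close>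

definition coord_cball :: "nat \<Rightarrow> real \<Rightarrow> (nat \<Rightarrow> real) set" where
  "coord_cball m r = {x. (\<forall>i\<ge>m. x i = 0) \<and> L2_set x {..<m} \<le> r}"

definition coord_sphere :: "nat \<Rightarrow> real \<Rightarrow> (nat \<Rightarrow> real) set" where
  "coord_sphere m r = {x. (\<forall>i\<ge>m. x i = 0) \<and> L2_set x {..<m} = r}"

definition coord_normalize :: "nat \<Rightarrow> (nat \<Rightarrow> real) \<Rightarrow> nat \<Rightarrow> real" where
  "coord_normalize m z = (\<lambda>i. z i / L2_set z {..<m})"

lemma L2_set_mult_abs: "L2_set (\<lambda>i. c * f i) A = \<bar>c\<bar> * L2_set f A"
proof -
  have "L2_set (\<lambda>i. c * f i) A = L2_set (\<lambda>i. \<bar>c\<bar> * f i) A"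
    unfolding L2_set_def by (simp add: power_mult_distrib)
  then show ?thesis by (simp add: L2_set_right_distrib)
qed

lemma L2_set_diff_le: "L2_set (\<lambda>i. f i - g i) A \<le> L2_set f A + L2_set g A"
  using L2_set_triangle_ineq[of f "\<lambda>i. - g i" A] L2_set_mult_abs[of "-1" g A] by simp

lemma abs_le_L2_set: "finite A \<Longrightarrow> i \<in> A \<Longrightarrow> \<bar>f i\<bar> \<le> L2_set f A"
  using member_le_L2_set[of A i "\<lambda>j. \<bar>f j\<bar>"] by (simp add: L2_set_def)

lemma L2_set_eq_1_iff: "L2_set x A = 1 \<longleftrightarrow> (\<Sum>i\<in>A. (x i)\<^sup>2) = 1"
  unfolding L2_set_def by auto

lemma coord_cball_abs_le: "x \<in> coord_cball m r \<Longrightarrow> i < m \<Longrightarrow> \<bar>x i\<bar> \<le> r"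
  unfolding coord_cball_def using abs_le_L2_set[of "{..<m}" i x] by force

lemma continuous_on_component: "continuous_on S (\<lambda>x::nat\<Rightarrow>real. x i)"
  by (rule continuous_on_subset[OF continuous_on_product_coordinates]) simp

lemma continuous_on_L2_set_coord: "continuous_on S (\<lambda>x::nat\<Rightarrow>real. L2_set x {..<m})"
  unfolding L2_set_def by (intro continuous_intros continuous_on_component)

lemma closed_coord_support: "closed {x::nat\<Rightarrow>real. \<forall>i\<ge>m. x i = 0}"
proof -
  have "{x::nat\<Rightarrow>real. \<forall>i\<ge>m. x i = 0} = (\<Inter>i\<in>{m..}. {x. x i = 0})" by auto
  then show ?thesis
    using closed_Collect_eq[OF continuous_on_component continuous_on_const] by auto
qed

lemma compact_coord_cube: "compact {x::nat\<Rightarrow>real. \<forall>i. x i \<in> (if i < m then {-r..r} else {0})}"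
proof -
  have "compactin (powertop_real UNIV) (PiE UNIV (\<lambda>i. if i < m then {-r..r} else {0}))"
    by (subst compactin_PiE) auto
  then show ?thesis by (simp add: euclidean_product_topology PiE_UNIV_domain Pi_def)
qed

lemma compact_closed_subset_coord_cball:
  assumes "closed S" "S \<subseteq> coord_cball m r"
  shows "compact S"
proof -
  let ?C = "{x::nat\<Rightarrow>real. \<forall>i. x i \<in> (if i < m then {-r..r} else {0})}"
  have "S \<subseteq> ?C"
  proof
    fix x assume "x \<in> S"
    then have x: "x \<in> coord_cball m r"
      using assms(2) by blast
    have "-r \<le> x i \<and> x i \<le> r" if "i < m" for i
      using coord_cball_abs_le[OF x that] by linarith
    then show "x \<in> ?C"
      using x unfolding coord_cball_def by auto
  qed
  then have "?C \<inter> S = S"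
    by blast
  then show ?thesis
    using compact_Int_closed[OF compact_coord_cube[of m r] assms(1)] by simp
qed

lemma compact_coord_cball: "compact (coord_cball m r)"
proof (rule compact_closed_subset_coord_cball[of _ m r])
  have "coord_cball m r = {x. \<forall>i\<ge>m. x i = 0} \<inter> {x. L2_set x {..<m} \<le> r}"
    unfolding coord_cball_def by blast
  then show "closed (coord_cball m r)"
    using closed_coord_support closed_Collect_le[OF continuous_on_L2_set_coord continuous_on_const]
    by auto
qed simp

lemma compact_coord_sphere: "compact (coord_sphere m r)"
proof (rule compact_closed_subset_coord_cball)
  have "coord_sphere m r = {x. \<forall>i\<ge>m. x i = 0} \<inter> {x. L2_set x {..<m} = r}"
    unfolding coord_sphere_def by blast
  then show "closed (coord_sphere m r)"
    using closed_coord_support closed_Collect_eq[OF continuous_on_L2_set_coord continuous_on_const]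
    by auto
  show "coord_sphere m r \<subseteq> coord_cball m r"
    unfolding coord_sphere_def coord_cball_def by auto
qed

lemma coord_sphere_nonempty:
  assumes "m > 0" "\<eta> \<ge> 0"
  shows "(\<lambda>i. if i = 0 then \<eta> else 0) \<in> coord_sphere m \<eta>"
proof -
  have "(\<Sum>i<m. (if i = 0 then \<eta> else 0)\<^sup>2) = (\<Sum>i<m. if i = 0 then \<eta>\<^sup>2 else 0)"
    by (intro sum.cong) auto
  also have "\<dots> = \<eta>\<^sup>2"
    using assms(1) by simp
  finally show ?thesis
    using assms unfolding coord_sphere_def L2_set_def by simp
qed

lemma nsphere_eq_coord_sphere: "nsphere n = top_of_set (coord_sphere (Suc n) 1)"
proof -
  have "{x. (\<Sum>i\<le>n. (x i)\<^sup>2) = 1 \<and> (\<forall>i>n. x i = 0)} = coord_sphere (Suc n) 1"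
    unfolding coord_sphere_def L2_set_eq_1_iff lessThan_Suc_atMost
    by (auto simp: Suc_le_eq)
  then show ?thesis
    unfolding nsphere euclidean_product_topology by simp
qed

lemma coord_normalize_in_sphere:
  assumes "L2_set z {..<m} > 0" and "\<forall>i\<ge>m. z i = 0"
  shows "coord_normalize m z \<in> coord_sphere m 1"
  using assms unfolding coord_sphere_def coord_normalize_def
  by (simp add: divide_inverse mult.commute[of _ "inverse _"] L2_set_mult_abs)

lemma coord_normalize_sphere: "x \<in> coord_sphere m 1 \<Longrightarrow> coord_normalize m x = x"
  unfolding coord_sphere_def coord_normalize_def by simp

lemma homotopic_coord_normalize:
  fixes h :: "real \<times> 'a::topological_space \<Rightarrow> nat \<Rightarrow> real"
  assumes cont: "continuous_on ({0..1} \<times> S) h"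
    and h: "\<And>p. p \<in> {0..1} \<times> S \<Longrightarrow> (\<forall>i\<ge>m. h p i = 0) \<and> L2_set (h p) {..<m} > 0"
    and f: "\<And>x. x \<in> S \<Longrightarrow> f x = coord_normalize m (h (0, x))"
    and g: "\<And>x. x \<in> S \<Longrightarrow> g x = coord_normalize m (h (1, x))"
  shows "homotopic_with_canon (\<lambda>_. True) S (coord_sphere m 1) f g"
proof -
  have hi: "continuous_on ({0..1} \<times> S) (\<lambda>p. h p i)" for i
    using cont by (rule continuous_on_product_then_coordinatewise)
  have "continuous_on ({0..1} \<times> S) (\<lambda>p. L2_set (h p) {..<m})"
    unfolding L2_set_def by (intro continuous_intros hi)
  then have cont_normalize: "continuous_on ({0..1} \<times> S) (\<lambda>p. coord_normalize m (h p))"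
    unfolding coord_normalize_def using h
    by (intro continuous_on_coordinatewise_then_product continuous_on_divide hi) fastforce+
  have in_sphere: "coord_normalize m (h p) \<in> coord_sphere m 1" if "p \<in> {0..1} \<times> S" for p
    using h[OF that] by (simp add: coord_normalize_in_sphere)
  have "\<exists>k. continuous_on ({0..1::real} \<times> S) k \<and> k \<in> {0..1} \<times> S \<rightarrow> coord_sphere m 1 \<and>
      (\<forall>x\<in>S. k (0, x) = f x) \<and> (\<forall>x\<in>S. k (1, x) = g x)"
    by (rule exI[of _ "\<lambda>p. coord_normalize m (h p)"]) (use cont_normalize in_sphere f g in auto)
  then show ?thesis by (simp add: homotopic_with)
qed

lemma L2_set_interpolation_pos:
  assumes x: "L2_set x A = 1" and e: "L2_set (\<lambda>i. e i - r * x i) A < r"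
    and t: "0 \<le> t" "t \<le> 1" and r: "r > 0"
  shows "L2_set (\<lambda>i. (1 - t) * x i + t * e i) A > 0"
proof -
  let ?z = "\<lambda>i. (1 - t) * x i + t * e i" and ?d = "\<lambda>i. e i - r * x i"
  have "1 - t + t * r = L2_set (\<lambda>i. (1 - t + t * r) * x i) A"
    using x t r by (simp add: L2_set_mult_abs)
  also have "\<dots> = L2_set (\<lambda>i. ?z i - t * ?d i) A"
    by (simp add: algebra_simps)
  also have "\<dots> \<le> L2_set ?z A + L2_set (\<lambda>i. t * ?d i) A"
    by (rule L2_set_diff_le)
  also have "\<dots> = L2_set ?z A + t * L2_set ?d A"
    using t by (simp add: L2_set_mult_abs)
  finally have "1 - t + t * r - t * L2_set ?d A \<le> L2_set ?z A"
    by simp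
  moreover have "t * L2_set ?d A < t * r \<or> t = 0"
    using e t by auto
  ultimately show ?thesis
    using t by auto
qed

lemma scaled_sphere_in_coord_cball:
  assumes "x \<in> coord_sphere m 1" "0 \<le> c" "c \<le> 1" "r \<ge> 0"
  shows "(\<lambda>j. c * r * x j) \<in> coord_cball m r"
  using assms unfolding coord_sphere_def coord_cball_def
  by (simp add: mult.assoc L2_set_mult_abs mult_left_le_one_le mult_nonneg_nonneg)

lemma continuous_on_scaled_sphere:
  fixes \<Gamma> :: "(nat \<Rightarrow> real) \<Rightarrow> nat \<Rightarrow> real" and c :: "real \<times> (nat \<Rightarrow> real) \<Rightarrow> real"
  assumes \<Gamma>: "continuous_on (coord_cball m r) \<Gamma>" and r: "r \<ge> 0"
    and c: "continuous_on ({0..1} \<times> coord_sphere m 1) c" "\<And>p. p \<in> {0..1} \<times> coord_sphere m 1 \<Longrightarrow> c p \<in> {0..1}"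
  shows "continuous_on ({0..1} \<times> coord_sphere m 1) (\<lambda>p. \<Gamma> (\<lambda>j. c p * r * snd p j))"
proof (rule continuous_on_compose2[OF \<Gamma>])
  have "continuous_on ({0..1} \<times> coord_sphere m 1) (\<lambda>p. snd p j)" for j
    by (intro continuous_on_product_then_coordinatewise[OF continuous_on_snd[OF continuous_on_id]])
  then show "continuous_on ({0..1} \<times> coord_sphere m 1) (\<lambda>p j. c p * r * snd p j)"
    by (intro continuous_on_coordinatewise_then_product continuous_on_mult continuous_on_const c(1))
  show "(\<lambda>p j. c p * r * snd p j) ` ({0..1} \<times> coord_sphere m 1) \<subseteq> coord_cball m r"
  proof (rule image_subsetI)
    fix p :: "real \<times> (nat \<Rightarrow> real)" assume p: "p \<in> {0..1} \<times> coord_sphere m 1"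
    show "(\<lambda>j. c p * r * snd p j) \<in> coord_cball m r"
      using c(2)[OF p] p r by (intro scaled_sphere_in_coord_cball) auto
  qed
qed

text \<open>If \<Gamma> had no zero, \<Gamma>(r x)/|\<Gamma>(r x)| on the unit sphere would be homotopic to the identity (along
  the segment from x to \<Gamma>(r x), which avoids 0 as |\<Gamma>(r x) - r x| < r) and to a constant (shrink r x
  to 0); but the sphere is not contractible.\<close>
lemma coord_cball_zero:
  fixes \<Gamma> :: "(nat \<Rightarrow> real) \<Rightarrow> nat \<Rightarrow> real"
  assumes m: "m > 0" and r: "r > 0"
    and cont: "continuous_on (coord_cball m r) \<Gamma>"
    and supp: "\<And>x i. x \<in> coord_cball m r \<Longrightarrow> i \<ge> m \<Longrightarrow> \<Gamma> x i = 0"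
    and near: "\<And>x. x \<in> coord_cball m r \<Longrightarrow> L2_set (\<lambda>i. \<Gamma> x i - x i) {..<m} < r"
  shows "\<exists>x\<in>coord_cball m r. \<Gamma> x = (\<lambda>i. 0)"
proof (rule ccontr)
  assume no_zero: "\<not> ?thesis"
  have pos: "L2_set (\<Gamma> x) {..<m} > 0" if "x \<in> coord_cball m r" for x
  proof -
    have "L2_set (\<Gamma> x) {..<m} \<noteq> 0"
    proof
      assume "L2_set (\<Gamma> x) {..<m} = 0"
      then have "\<Gamma> x i = 0" for i
        using supp[OF that, of i] by (cases "i < m") (auto simp: L2_set_eq_0_iff)
      then show False
        using no_zero that by auto
    qed
    then show ?thesis
      using L2_set_nonneg[of "\<Gamma> x" "{..<m}"] by linarith
  qed
  let ?S = "coord_sphere m 1"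
  have in_cball: "(\<lambda>j. c * r * x j) \<in> coord_cball m r" if "x \<in> ?S" "0 \<le> c" "c \<le> 1" for c x
    using scaled_sphere_in_coord_cball that r by simp
  define h where "h p = (\<lambda>i. (1 - fst p) * snd p i + fst p * \<Gamma> (\<lambda>j. 1 * r * snd p j) i)"
    for p :: "real \<times> (nat \<Rightarrow> real)"
  have id_homotopic: "homotopic_with_canon (\<lambda>_. True) ?S ?S id (\<lambda>x. coord_normalize m (\<Gamma> (\<lambda>j. 1 * r * x j)))"
  proof (rule homotopic_coord_normalize[where h = h])
    have cont1: "continuous_on ({0..1::real} \<times> ?S) (\<lambda>p. \<Gamma> (\<lambda>j. 1 * r * snd p j))"
      using r by (intro continuous_on_scaled_sphere[OF cont, where c = "\<lambda>_. 1"]) (auto intro: continuous_on_const)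
    show "continuous_on ({0..1::real} \<times> ?S) h"
      unfolding h_def
      by (intro continuous_on_coordinatewise_then_product continuous_on_add continuous_on_mult
          continuous_on_diff continuous_on_const continuous_on_fst continuous_on_id
          continuous_on_product_then_coordinatewise[OF continuous_on_snd[OF continuous_on_id]]
          continuous_on_product_then_coordinatewise[OF cont1])
    fix p :: "real \<times> (nat \<Rightarrow> real)" assume "p \<in> {0..1} \<times> ?S"
    then have x: "snd p \<in> ?S" and t: "0 \<le> fst p" "fst p \<le> 1"
      by auto
    have sphere: "L2_set (snd p) {..<m} = 1"
      using x by (simp add: coord_sphere_def)
    have "L2_set (\<lambda>i. \<Gamma> (\<lambda>j. 1 * r * snd p j) i - r * snd p i) {..<m} < r"
      using near[OF in_cball[OF x zero_le_one order_refl]] by simp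
    then have "L2_set (h p) {..<m} > 0"
      unfolding h_def by (rule L2_set_interpolation_pos[OF sphere _ t r])
    moreover have "\<forall>i\<ge>m. h p i = 0"
      using x supp[OF in_cball[OF x zero_le_one order_refl]] unfolding h_def coord_sphere_def by simp
    ultimately show "(\<forall>i\<ge>m. h p i = 0) \<and> L2_set (h p) {..<m} > 0"
      by blast
  qed (simp_all add: h_def coord_normalize_sphere)
  have const_homotopic: "homotopic_with_canon (\<lambda>_. True) ?S ?S
      (\<lambda>x. coord_normalize m (\<Gamma> (\<lambda>j. 1 * r * x j))) (\<lambda>x. coord_normalize m (\<Gamma> (\<lambda>j. 0 * r * x j)))"
  proof (rule homotopic_coord_normalize[where h = "\<lambda>p. \<Gamma> (\<lambda>j. (1 - fst p) * r * snd p j)"])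
    show "continuous_on ({0..1::real} \<times> ?S) (\<lambda>p. \<Gamma> (\<lambda>j. (1 - fst p) * r * snd p j))"
      using r by (intro continuous_on_scaled_sphere[OF cont, where c = "\<lambda>p. 1 - fst p"])
        (auto intro!: continuous_on_diff continuous_on_const continuous_on_fst continuous_on_id)
    fix p :: "real \<times> (nat \<Rightarrow> real)" assume "p \<in> {0..1} \<times> ?S"
    then have "(\<lambda>j. (1 - fst p) * r * snd p j) \<in> coord_cball m r"
      by (auto intro: in_cball)
    then show "(\<forall>i\<ge>m. \<Gamma> (\<lambda>j. (1 - fst p) * r * snd p j) i = 0) \<and>
        L2_set (\<Gamma> (\<lambda>j. (1 - fst p) * r * snd p j)) {..<m} > 0"
      using supp pos by blast
  qed simp_all
  have "contractible ?S"
    using homotopic_with_trans[OF id_homotopic const_homotopic] unfolding contractible_def by auto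
  moreover have "nsphere (m - 1) = top_of_set ?S"
    using m nsphere_eq_coord_sphere[of "m - 1"] by simp
  ultimately show False
    using non_contractible_space_nsphere[of "m - 1"] by simp
qed

section \<open>Metric facts in Frechet spaces\<close>

context
  assumes frechet: "frechet_space TYPE('a::{real_vector, complete_space})"
begin

lemma frechet_dist_translate: "dist (x + z) (y + z) = dist x (y::'a)"
  using frechet unfolding frechet_space_def by blast

lemma frechet_dist_diff: "dist x y = dist (x - y) (0::'a)"
  using frechet_dist_translate[of "x - y" y 0] by simp

lemma frechet_dist_add_le: "dist (a + b) (c + d) \<le> dist a c + dist b (d::'a)"
proof -
  have "dist (a + b) (c + d) \<le> dist (a + b) (c + b) + dist (c + b) (c + d)"
    by (rule dist_triangle)
  also have "\<dots> = dist a c + dist b d"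
    using frechet_dist_translate[of a b c] frechet_dist_translate[of b c d] by (simp add: add.commute)
  finally show ?thesis .
qed

lemma frechet_dist_minus: "dist (-a) (-b) = dist a (b::'a)"
  using frechet_dist_translate[of "-a" "a + b" "-b"] by (simp add: dist_commute)

lemma frechet_dist_sum_le: "dist (\<Sum>i\<in>I. f i) (0::'a) \<le> (\<Sum>i\<in>I. dist (f i) 0)"
proof (induction I rule: infinite_finite_induct)
  case (insert i I)
  then show ?case
    using frechet_dist_add_le[of "f i" "sum f I" 0 0] by simp
qed simp_all

lemma frechet_continuous_on_add:
  fixes f g :: "'b::metric_space \<Rightarrow> 'a"
  assumes "continuous_on S f" "continuous_on S g"
  shows "continuous_on S (\<lambda>x. f x + g x)"
  unfolding continuous_on_iff
proof (intro ballI allI impI)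
  fix x and e :: real assume x: "x \<in> S" and e: "e > 0"
  obtain d1 where d1: "d1 > 0" "\<forall>y\<in>S. dist y x < d1 \<longrightarrow> dist (f y) (f x) < e/2"
    using assms(1) x e unfolding continuous_on_iff by (meson half_gt_zero)
  obtain d2 where d2: "d2 > 0" "\<forall>y\<in>S. dist y x < d2 \<longrightarrow> dist (g y) (g x) < e/2"
    using assms(2) x e unfolding continuous_on_iff by (meson half_gt_zero)
  have "dist (f y + g y) (f x + g x) < e" if "y \<in> S" "dist y x < min d1 d2" for y
  proof -
    have "dist (f y) (f x) < e/2" "dist (g y) (g x) < e/2"
      using d1 d2 that by auto
    then show ?thesis
      using frechet_dist_add_le[of "f y" "g y" "f x" "g x"] by linarith
  qed
  then show "\<exists>d>0. \<forall>y\<in>S. dist y x < d \<longrightarrow> dist (f y + g y) (f x + g x) < e"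
    using d1 d2 by (intro exI[of _ "min d1 d2"]) auto
qed

lemma frechet_continuous_on_minus:
  fixes f :: "'b::metric_space \<Rightarrow> 'a"
  shows "continuous_on S f \<Longrightarrow> continuous_on S (\<lambda>x. - f x)"
  unfolding continuous_on_iff by (simp add: frechet_dist_minus)

lemma frechet_continuous_on_diff:
  fixes f g :: "'b::metric_space \<Rightarrow> 'a"
  assumes "continuous_on S f" "continuous_on S g"
  shows "continuous_on S (\<lambda>x. f x - g x)"
  using frechet_continuous_on_add[OF assms(1) frechet_continuous_on_minus[OF assms(2)]] by simp

lemma frechet_continuous_on_scaleR:
  assumes "continuous_on S c" "continuous_on S f"
  shows "continuous_on S (\<lambda>x. c x *\<^sub>R f x :: 'a)"
proof -
  have "continuous_on UNIV (\<lambda>q::real \<times> 'a. fst q *\<^sub>R snd q)"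
    using frechet unfolding frechet_space_def by blast
  then have "continuous_on S ((\<lambda>q::real \<times> 'a. fst q *\<^sub>R snd q) \<circ> (\<lambda>x. (c x, f x)))"
    by (intro continuous_on_compose continuous_on_Pair assms) (rule continuous_on_subset, auto)
  then show ?thesis
    by (simp add: o_def)
qed

lemma frechet_continuous_on_sum:
  fixes f :: "'i \<Rightarrow> 'b::metric_space \<Rightarrow> 'a"
  assumes "\<And>i. i \<in> I \<Longrightarrow> continuous_on S (f i)"
  shows "continuous_on S (\<lambda>x. \<Sum>i\<in>I. f i x)"
  using assms
proof (induction I rule: infinite_finite_induct)
  case (insert i I)
  then show ?case
    by (simp add: frechet_continuous_on_add)
qed (simp_all add: continuous_on_const)

text \<open>Local convexity yields balanced neighbourhoods of 0: if z and -z lie in a convex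
  neighbourhood V of 0, so does l z for every |l| \<le> 1.\<close>
lemma frechet_small_scaleR:
  assumes "\<gamma> > 0"
  shows "\<exists>\<rho>>0. \<forall>z l. dist z 0 < \<rho> \<longrightarrow> \<bar>l\<bar> \<le> 1 \<longrightarrow> dist (l *\<^sub>R z) (0::'a) < \<gamma>"
proof -
  have "\<forall>U::'a set. open U \<and> 0 \<in> U \<longrightarrow> (\<exists>V. open V \<and> convex V \<and> 0 \<in> V \<and> V \<subseteq> U)"
    using frechet unfolding frechet_space_def by blast
  moreover have "open (ball (0::'a) \<gamma>) \<and> 0 \<in> ball (0::'a) \<gamma>"
    using assms by simp
  ultimately obtain V where V: "open V" "convex V" "(0::'a) \<in> V" "V \<subseteq> ball 0 \<gamma>"
    by blast
  have "continuous_on UNIV (uminus :: 'a \<Rightarrow> 'a)"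
    using frechet_continuous_on_minus[OF continuous_on_id] by simp
  then have "open (V \<inter> uminus -` V)"
    using V(1) by (simp add: open_vimage open_Int)
  moreover have "0 \<in> V \<inter> uminus -` V"
    using V(3) by simp
  ultimately obtain \<rho> where \<rho>: "\<rho> > 0" "ball 0 \<rho> \<subseteq> V \<inter> uminus -` V"
    by (meson openE)
  have scale_in_V: "l *\<^sub>R z \<in> V" if "z \<in> V" "- z \<in> V" "\<bar>l\<bar> \<le> 1" for z and l :: real
  proof (cases "l \<ge> 0")
    case True
    then have "l *\<^sub>R z + (1 - l) *\<^sub>R 0 \<in> V"
      using that V by (intro convexD) auto
    then show ?thesis by simp
  next
    case False
    then have "(- l) *\<^sub>R (- z) + (1 + l) *\<^sub>R 0 \<in> V"
      using that V by (intro convexD) auto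
    then show ?thesis by simp
  qed
  have "dist (l *\<^sub>R z) 0 < \<gamma>" if "dist z 0 < \<rho>" "\<bar>l\<bar> \<le> 1" for z :: 'a and l :: real
  proof -
    have "z \<in> V" "- z \<in> V"
      using that(1) \<rho>(2) by (auto simp: dist_commute subset_iff)
    then have "l *\<^sub>R z \<in> ball 0 \<gamma>"
      using that(2) V(4) scale_in_V by blast
    then show ?thesis
      by (simp add: dist_commute)
  qed
  with \<rho>(1) show ?thesis
    by blast
qed

lemma frechet_small_sum_scaleR:
  fixes m :: nat
  assumes "\<gamma> > 0"
  shows "\<exists>\<rho>>0. \<forall>d x. (\<forall>i<m. dist (d i) 0 < \<rho>) \<longrightarrow> (\<forall>i<m. \<bar>x i\<bar> \<le> 1) \<longrightarrow>
      dist (\<Sum>i<m. x i *\<^sub>R d i) (0::'a) < \<gamma>"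
proof -
  define \<gamma>' where "\<gamma>' = \<gamma> / (real m + 1)"
  have "\<gamma>' > 0"
    using assms by (simp add: \<gamma>'_def)
  then obtain \<rho> where \<rho>: "\<rho> > 0" "\<forall>z l. dist z 0 < \<rho> \<longrightarrow> \<bar>l\<bar> \<le> 1 \<longrightarrow> dist (l *\<^sub>R z) (0::'a) < \<gamma>'"
    using frechet_small_scaleR by blast
  have "dist (\<Sum>i<m. x i *\<^sub>R d i) 0 < \<gamma>"
    if "\<forall>i<m. dist (d i) 0 < \<rho>" "\<forall>i<m. \<bar>x i\<bar> \<le> 1" for d :: "nat \<Rightarrow> 'a" and x
  proof -
    have "dist (\<Sum>i<m. x i *\<^sub>R d i) 0 \<le> (\<Sum>i<m. dist (x i *\<^sub>R d i) 0)"
      by (rule frechet_dist_sum_le)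
    also have "\<dots> \<le> (\<Sum>i<m. \<gamma>')"
      using that \<rho>(2)[rule_format] by (intro sum_mono less_imp_le) auto
    also have "\<dots> < \<gamma>"
      using assms by (simp add: \<gamma>'_def field_simps)
    finally show ?thesis .
  qed
  with \<rho>(1) show ?thesis
    by blast
qed

end

section \<open>Coordinates on a finite-dimensional subspace\<close>

locale finite_coordinates =
  fixes B :: "'a::{real_vector, complete_space} set" and m :: nat and b :: "nat \<Rightarrow> 'a"
  assumes frechet: "frechet_space TYPE('a)"
    and independent: "independent B"
    and enumeration: "bij_betw b {..<m} B"
begin

definition coord :: "'a \<Rightarrow> nat \<Rightarrow> real" where
  "coord y = (\<lambda>i. if i < m then representation B y (b i) else 0)"

definition lincomb :: "(nat \<Rightarrow> real) \<Rightarrow> 'a" where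
  "lincomb c = (\<Sum>i<m. c i *\<^sub>R b i)"

lemma finite_basis: "finite B"
  using enumeration bij_betw_finite by blast

lemma basis_in: "i < m \<Longrightarrow> b i \<in> B"
  using enumeration by (auto simp: bij_betw_def)

lemma sum_enumeration: "(\<Sum>i<m. f (b i)) = (\<Sum>v\<in>B. f v)"
  using sum.reindex_bij_betw[OF enumeration, of f] by simp

lemma coord_eq_0: "i \<ge> m \<Longrightarrow> coord y i = 0"
  unfolding coord_def by simp

lemma lincomb_coord:
  assumes "y \<in> span B"
  shows "lincomb (coord y) = y"
proof -
  have "lincomb (coord y) = (\<Sum>i<m. representation B y (b i) *\<^sub>R b i)"
    unfolding lincomb_def coord_def by (intro sum.cong) auto
  also have "\<dots> = (\<Sum>v\<in>B. representation B y v *\<^sub>R v)"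
    by (rule sum_enumeration)
  also have "\<dots> = y"
    by (rule sum_representation_eq[OF independent assms finite_basis order_refl])
  finally show ?thesis .
qed

lemma lincomb_in_span: "lincomb c \<in> span B"
  unfolding lincomb_def by (intro span_sum span_scale span_base basis_in) simp

lemma lincomb_diff: "lincomb (\<lambda>i. c i - c' i) = lincomb c - lincomb c'"
  unfolding lincomb_def by (simp add: scaleR_diff_left sum_subtractf)

lemma lincomb_mult: "lincomb (\<lambda>i. l * c i) = l *\<^sub>R lincomb c"
  unfolding lincomb_def by (simp add: scaleR_sum_right)

lemma lincomb_eq_0:
  assumes "\<forall>i\<ge>m. c i = 0" and "lincomb c = 0"
  shows "c = (\<lambda>i. 0)"
proof -
  define u where "u v = c (inv_into {..<m} b v)" for v
  have u: "u (b i) = c i" if "i < m" for i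
    using enumeration that unfolding u_def bij_betw_def by (simp add: inv_into_f_f)
  have "(\<Sum>v\<in>B. u v *\<^sub>R v) = (\<Sum>i<m. u (b i) *\<^sub>R b i)"
    by (rule sum_enumeration[symmetric])
  also have "\<dots> = lincomb c"
    unfolding lincomb_def by (intro sum.cong) (simp_all add: u)
  finally have sum_u: "(\<Sum>v\<in>B. u v *\<^sub>R v) = lincomb c" .
  have "\<forall>v\<in>B. u v = 0"
  proof (rule ccontr)
    assume "\<not> ?thesis"
    then have "dependent B"
      unfolding dependent_finite[OF finite_basis] using assms(2) sum_u by auto
    with independent show False
      by contradiction
  qed
  then have "c i = 0" if "i < m" for i
    using u[OF that] basis_in[OF that] by simp
  then show ?thesis
    using assms(1) by (metis not_le)
qed

lemma coord_lincomb:
  assumes "\<forall>i\<ge>m. c i = 0"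
  shows "coord (lincomb c) = c"
proof -
  have "lincomb (\<lambda>i. coord (lincomb c) i - c i) = 0"
    using lincomb_coord[OF lincomb_in_span] by (simp add: lincomb_diff)
  then have "(\<lambda>i. coord (lincomb c) i - c i) = (\<lambda>i. 0)"
    using assms by (intro lincomb_eq_0) (simp_all add: coord_eq_0)
  then show ?thesis
    by (simp add: fun_eq_iff)
qed

lemma coord_diff: "y \<in> span B \<Longrightarrow> y' \<in> span B \<Longrightarrow> coord (y - y') = (\<lambda>i. coord y i - coord y' i)"
  unfolding coord_def by (auto simp: representation_diff[OF independent])

lemma continuous_on_lincomb: "continuous_on S lincomb"
  unfolding lincomb_def
  by (intro frechet_continuous_on_sum[OF frechet] frechet_continuous_on_scaleR[OF frechet]
      continuous_on_component continuous_on_const)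

text \<open>The image under lincomb of the coordinate sphere of radius \<eta> is compact and avoids 0,
  so it misses a balanced neighbourhood of 0; scaling back gives small coordinates near 0.\<close>
lemma small_coord:
  assumes "\<eta> > 0"
  shows "\<exists>\<gamma>>0. \<forall>y\<in>span B. dist y 0 < \<gamma> \<longrightarrow> L2_set (coord y) {..<m} < \<eta>"
proof (cases "m = 0")
  case True
  with assms show ?thesis
    by (intro exI[of _ 1]) auto
next
  case False
  let ?K = "lincomb ` coord_sphere m \<eta>"
  have "compact ?K"
    by (intro compact_continuous_image continuous_on_lincomb compact_coord_sphere)
  moreover have "?K \<noteq> {}"
    using coord_sphere_nonempty[of m \<eta>] False assms by auto
  moreover have "continuous_on ?K (\<lambda>z. dist z 0)"
    by (intro continuous_on_dist continuous_on_id continuous_on_const)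
  ultimately obtain z0 where z0: "z0 \<in> ?K" "\<And>z. z \<in> ?K \<Longrightarrow> dist z0 0 \<le> dist z 0"
    by (metis continuous_attains_inf)
  have "z0 \<noteq> 0"
  proof
    assume "z0 = 0"
    then obtain c where c: "c \<in> coord_sphere m \<eta>" "lincomb c = 0"
      using z0(1) by auto
    then have "c = (\<lambda>i. 0)"
      by (intro lincomb_eq_0) (simp_all add: coord_sphere_def)
    then have "L2_set c {..<m} = 0"
      by (simp add: L2_set_def)
    with c(1) assms show False
      by (simp add: coord_sphere_def)
  qed
  then have z0_pos: "dist z0 0 > 0"
    by simp
  obtain \<gamma> where \<gamma>: "\<gamma> > 0" "\<forall>z::'a. \<forall>l. dist z 0 < \<gamma> \<longrightarrow> \<bar>l\<bar> \<le> 1 \<longrightarrow> dist (l *\<^sub>R z) 0 < dist z0 0"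
    using frechet_small_scaleR[OF frechet z0_pos] by blast
  have "L2_set (coord y) {..<m} < \<eta>" if y: "y \<in> span B" "dist y 0 < \<gamma>" for y
  proof (rule ccontr)
    assume "\<not> ?thesis"
    then have N: "\<eta> \<le> L2_set (coord y) {..<m}"
      by simp
    define l where "l = \<eta> / L2_set (coord y) {..<m}"
    have l: "0 < l" "l \<le> 1"
      using N assms by (auto simp: l_def)
    have "L2_set (\<lambda>i. l * coord y i) {..<m} = l * L2_set (coord y) {..<m}"
      using l by (simp add: L2_set_mult_abs)
    also have "\<dots> = \<eta>"
      using N assms unfolding l_def by simp
    finally have "(\<lambda>i. l * coord y i) \<in> coord_sphere m \<eta>"
      by (simp add: coord_sphere_def coord_eq_0)
    moreover have "l *\<^sub>R y = lincomb (\<lambda>i. l * coord y i)"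
      unfolding lincomb_mult lincomb_coord[OF y(1)] ..
    ultimately have "l *\<^sub>R y \<in> ?K"
      by blast
    then have "dist z0 0 \<le> dist (l *\<^sub>R y) 0"
      by (rule z0(2))
    moreover have "dist (l *\<^sub>R y) 0 < dist z0 0"
      using l by (intro \<gamma>(2)[rule_format] y(2)) simp
    ultimately show False
      by simp
  qed
  with \<gamma>(1) show ?thesis
    by blast
qed

lemma continuous_on_coord: "continuous_on (span B) coord"
proof (rule continuous_on_coordinatewise_then_product)
  fix i
  show "continuous_on (span B) (\<lambda>y. coord y i)"
    unfolding continuous_on_iff
  proof (intro ballI allI impI)
    fix y0 and e :: real assume y0: "y0 \<in> span B" and e: "e > 0"
    obtain \<gamma> where \<gamma>: "\<gamma> > 0" "\<forall>y\<in>span B. dist y 0 < \<gamma> \<longrightarrow> L2_set (coord y) {..<m} < e"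
      using small_coord[OF e] by blast
    have "dist (coord y i) (coord y0 i) < e" if y: "y \<in> span B" "dist y y0 < \<gamma>" for y
    proof (cases "i < m")
      case True
      have "L2_set (coord (y - y0)) {..<m} < e"
        using y y0 \<gamma>(2)[rule_format, of "y - y0"] frechet_dist_diff[OF frechet, of y y0] by (simp add: span_diff)
      moreover have "\<bar>coord (y - y0) i\<bar> \<le> L2_set (coord (y - y0)) {..<m}"
        using True by (intro abs_le_L2_set) auto
      ultimately show ?thesis
        using coord_diff[OF y(1) y0] by (simp add: dist_real_def)
    qed (use e in \<open>simp add: coord_eq_0\<close>)
    with \<gamma>(1) show "\<exists>d>0. \<forall>y\<in>span B. dist y y0 < d \<longrightarrow> dist (coord y i) (coord y0 i) < e"
      by blast
  qed
qed

lemma small_lincomb: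
  assumes "\<gamma> > 0"
  shows "\<exists>r>0. r \<le> 1 \<and> (\<forall>x. (\<forall>i<m. \<bar>x i\<bar> \<le> r) \<longrightarrow> dist (lincomb x) 0 < \<gamma>)"
proof -
  obtain \<rho> where \<rho>: "\<rho> > 0" "\<forall>d x. (\<forall>i<m. dist (d i) 0 < \<rho>) \<longrightarrow> (\<forall>i<m. \<bar>x i\<bar> \<le> 1) \<longrightarrow>
      dist (\<Sum>i<m. x i *\<^sub>R d i) (0::'a) < \<gamma>"
    using frechet_small_sum_scaleR[OF frechet assms, of m] by blast
  have "\<forall>\<^sub>F l in at (0::real). dist (l *\<^sub>R b i) 0 < \<rho>" for i
  proof -
    have "continuous_on UNIV (\<lambda>l::real. l *\<^sub>R b i)"
      by (rule frechet_continuous_on_scaleR[OF frechet continuous_on_id continuous_on_const])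
    then have "isCont (\<lambda>l::real. l *\<^sub>R b i) 0"
      by (simp add: continuous_on_eq_continuous_at)
    then show ?thesis
      using \<rho>(1) unfolding isCont_def by (auto dest: tendstoD)
  qed
  then have "\<forall>\<^sub>F l in at (0::real). \<forall>i\<in>{..<m}. dist (l *\<^sub>R b i) 0 < \<rho>"
    by (simp add: eventually_ball_finite)
  then obtain d where d: "d > 0" "\<And>l::real. l \<noteq> 0 \<Longrightarrow> \<bar>l\<bar> < d \<Longrightarrow> \<forall>i<m. dist (l *\<^sub>R b i) 0 < \<rho>"
    unfolding eventually_at by (auto simp: dist_real_def)
  define r where "r = min 1 (d/2)"
  have r: "r > 0" "r \<le> 1" "\<forall>i<m. dist (r *\<^sub>R b i) 0 < \<rho>"
    using d by (auto simp: r_def)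
  have "dist (lincomb x) 0 < \<gamma>" if x: "\<forall>i<m. \<bar>x i\<bar> \<le> r" for x
  proof -
    have "dist (\<Sum>i<m. (x i / r) *\<^sub>R (r *\<^sub>R b i)) 0 < \<gamma>"
      using r(1,3) x by (intro \<rho>(2)[rule_format]) (auto simp: abs_divide)
    moreover have "lincomb x = (\<Sum>i<m. (x i / r) *\<^sub>R (r *\<^sub>R b i))"
      unfolding lincomb_def using r(1) by (intro sum.cong) auto
    ultimately show ?thesis
      by simp
  qed
  with r(1,2) show ?thesis
    by blast
qed

lemma exists_zero_near_lincomb:
  assumes r: "r > 0"
    and cont: "continuous_on (coord_cball m r) G"
    and span: "\<And>x. x \<in> coord_cball m r \<Longrightarrow> G x \<in> span B"
    and near: "\<And>x. x \<in> coord_cball m r \<Longrightarrow> L2_set (coord (G x - lincomb x)) {..<m} < r"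
  shows "\<exists>x\<in>coord_cball m r. G x = 0"
proof (cases "m = 0")
  case True
  then have "B = {}"
    using enumeration by (simp add: bij_betw_def)
  moreover have "(\<lambda>i. 0) \<in> coord_cball m r"
    using r by (simp add: coord_cball_def L2_set_def)
  ultimately show ?thesis
    using span[of "\<lambda>i. 0"] by auto
next
  case False
  have "\<exists>x\<in>coord_cball m r. coord (G x) = (\<lambda>i. 0)"
  proof (rule coord_cball_zero[OF _ r])
    show "continuous_on (coord_cball m r) (\<lambda>x. coord (G x))"
      using span by (intro continuous_on_compose2[OF continuous_on_coord cont]) auto
    fix x assume x: "x \<in> coord_cball m r"
    have "coord (G x - lincomb x) = (\<lambda>i. coord (G x) i - x i)"
      using x coord_diff[OF span[OF x] lincomb_in_span] coord_lincomb[of x]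
      by (simp add: coord_cball_def)
    then show "L2_set (\<lambda>i. coord (G x) i - x i) {..<m} < r"
      using near[OF x] by simp
  qed (use False in \<open>simp_all add: coord_eq_0\<close>)
  then obtain x where x: "x \<in> coord_cball m r" "coord (G x) = (\<lambda>i. 0)"
    by blast
  have "G x = lincomb (coord (G x))"
    using lincomb_coord[OF span[OF x(1)]] by simp
  also have "\<dots> = 0"
    by (simp add: x(2) lincomb_def)
  finally show ?thesis
    using x(1) by blast
qed

end

section \<open>Compositions of local semigroups\<close>

lemma apply_seq_append:
  "apply_seq (L1 @ L2) u = (case apply_seq L1 u of None \<Rightarrow> None | Some w \<Rightarrow> apply_seq L2 w)"
  by (induction L1 arbitrary: u) (auto split: option.splits)

lemma attainable_trans:
  assumes "w \<in> attainable \<D> u s" and "v \<in> attainable \<D> w t"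
  shows "v \<in> attainable \<D> u (s + t)"
proof -
  obtain L1 where L1: "L1 \<noteq> []" "\<forall>(\<Psi>, r)\<in>set L1. \<Psi> \<in> \<D> \<and> r > 0"
    "sum_list (map snd L1) = s" "apply_seq L1 u = Some w"
    using assms(1) unfolding attainable_def by blast
  obtain L2 where L2: "L2 \<noteq> []" "\<forall>(\<Psi>, r)\<in>set L2. \<Psi> \<in> \<D> \<and> r > 0"
    "sum_list (map snd L2) = t" "apply_seq L2 w = Some v"
    using assms(2) unfolding attainable_def by blast
  have "apply_seq (L1 @ L2) u = Some v"
    using L1(4) L2(4) by (simp add: apply_seq_append)
  with L1 L2 show ?thesis
    unfolding attainable_def by (intro CollectI exI[of _ "L1 @ L2"]) auto
qed

lemma attainable_single:
  assumes "\<Psi> \<in> \<D>" "t > 0" "\<Psi> t u = Some v"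
  shows "v \<in> attainable \<D> u t"
  using assms unfolding attainable_def by (intro CollectI exI[of _ "[(\<Psi>, t)]"]) simp

lemma sum_list_pos: "xs \<noteq> [] \<Longrightarrow> (\<And>x. x \<in> set xs \<Longrightarrow> x > 0) \<Longrightarrow> sum_list xs > (0::real)"
proof (induction xs)
  case (Cons x xs)
  have "0 \<le> sum_list xs"
  proof (rule sum_list_nonneg)
    fix y assume "y \<in> set xs"
    then show "0 \<le> y"
      using Cons.prems(2)[of y] by simp
  qed
  moreover have "x > 0"
    using Cons.prems(2) by simp
  ultimately show ?case
    by simp
qed simp

lemma attainable_time_pos:
  assumes "v \<in> attainable \<D> u t"
  shows "t > 0"
proof -
  obtain L where L: "L \<noteq> []" "\<forall>(\<Psi>, r)\<in>set L. \<Psi> \<in> \<D> \<and> r > 0" "sum_list (map snd L) = t"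
    using assms unfolding attainable_def by blast
  have "sum_list (map snd L) > 0"
    using L(1,2) by (intro sum_list_pos) auto
  then show ?thesis
    using L(3) by simp
qed

definition param_seq :: "('a family \<times> real \<times> ('a \<Rightarrow> 'a)) list \<Rightarrow> 'a \<Rightarrow> ('a semigroup \<times> real) list" where
  "param_seq L p = map (\<lambda>((\<Phi>, Z), s, f). ((\<lambda>r v. \<Phi> r v (f p)), s)) L"

definition param_time :: "('a family \<times> real \<times> ('a \<Rightarrow> 'a)) list \<Rightarrow> real" where
  "param_time L = sum_list (map (\<lambda>(_, s, _). s) L)"

definition admissible_params ::
    "'a::topological_space family set \<Rightarrow> 'a set \<Rightarrow> ('a family \<times> real \<times> ('a \<Rightarrow> 'a)) list \<Rightarrow> bool" where
  "admissible_params \<FF> K L \<longleftrightarrow>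
     L \<noteq> [] \<and> (\<forall>((\<Phi>, Z), s, f)\<in>set L. (\<Phi>, Z) \<in> \<FF> \<and> s > 0 \<and> continuous_on K f \<and> f ` K \<subseteq> Z)"

lemma param_seq_Cons: "param_seq (((\<Phi>, Z), s, f) # L) p = ((\<lambda>r v. \<Phi> r v (f p)), s) # param_seq L p"
  unfolding param_seq_def by simp

lemma admissible_params_nonempty:
  assumes "admissible_params \<FF> K L" "p \<in> K"
  shows "\<exists>\<Phi> Z. (\<Phi>, Z) \<in> \<FF> \<and> Z \<noteq> {}"
proof -
  obtain x s f where hd: "hd L = (x, s, f)"
    by (rule prod_cases3)
  obtain \<Phi> Z where "x = (\<Phi>, Z)"
    by (rule prod.exhaust)
  moreover have "hd L \<in> set L"
    using assms(1) by (simp add: admissible_params_def)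
  ultimately have a: "((\<Phi>, Z), s, f) \<in> set L"
    using hd by simp
  then have "(\<Phi>, Z) \<in> \<FF>" "f p \<in> Z"
    using bspec[OF conjunct2[OF assms(1)[unfolded admissible_params_def]] a] assms(2) by auto
  then show ?thesis
    by blast
qed

lemma param_seq_attainable:
  assumes "admissible_params \<FF> K L" and "p \<in> K" and "apply_seq (param_seq L p) u = Some w"
  shows "w \<in> attainable (DD \<FF>) u (param_time L)"
proof -
  have "sum_list (map snd (param_seq L p)) = param_time L"
    unfolding param_seq_def param_time_def by (induction L) auto
  moreover have "\<forall>(\<Psi>, r)\<in>set (param_seq L p). \<Psi> \<in> DD \<FF> \<and> r > 0"
  proof (clarsimp simp: param_seq_def)
    fix \<Phi> Z s f assume a: "((\<Phi>, Z), s, f) \<in> set L"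
    then have "(\<Phi>, Z) \<in> \<FF>" "s > 0" "f p \<in> Z"
      using bspec[OF conjunct2[OF assms(1)[unfolded admissible_params_def]] a] assms(2) by auto
    then show "(\<lambda>r v. \<Phi> r v (f p)) \<in> DD \<FF> \<and> 0 < s"
      unfolding DD_def by blast
  qed
  moreover have "param_seq L p \<noteq> []"
    using assms(1) by (simp add: param_seq_def admissible_params_def)
  ultimately show ?thesis
    using assms(3) unfolding attainable_def by blast
qed

lemma family_continuous:
  assumes "is_family (\<Phi>, Z)" "p \<in> Z" "t \<ge> 0" "\<Phi> t u p = Some x" "e > 0"
  shows "\<exists>\<delta>>0. \<forall>t'\<ge>0. \<forall>u'. \<forall>p'\<in>Z. \<bar>t - t'\<bar> + dist u u' + dist p p' < \<delta> \<longrightarrow>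
           (\<exists>x'. \<Phi> t' u' p' = Some x' \<and> dist x x' < e)"
  using assms unfolding is_family_def by auto

lemma family_near_start:
  assumes "is_family (\<Phi>, Z)" "q \<in> Z" "\<eta> > 0"
  shows "\<exists>\<delta>>0. \<forall>t w. 0 \<le> t \<and> t + dist w v < \<delta> \<longrightarrow> (\<exists>x. \<Phi> t w q = Some x \<and> dist x v < \<eta>)"
proof -
  have "\<Phi> 0 v q = Some v"
    using assms(1,2) unfolding is_family_def by auto
  then obtain \<delta> where \<delta>: "\<delta> > 0" "\<forall>t'\<ge>0. \<forall>u'. \<forall>p'\<in>Z. \<bar>0 - t'\<bar> + dist v u' + dist q p' < \<delta> \<longrightarrow>
      (\<exists>x'. \<Phi> t' u' p' = Some x' \<and> dist v x' < \<eta>)"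
    using family_continuous[OF assms(1,2) order_refl _ assms(3)] by blast
  have "\<exists>x. \<Phi> t w q = Some x \<and> dist x v < \<eta>" if "0 \<le> t" "t + dist w v < \<delta>" for t w
    using that assms(2) \<delta>(2)[rule_format, of t q w] by (auto simp: dist_commute)
  with \<delta>(1) show ?thesis
    by blast
qed

lemma continuous_on_family_orbit:
  assumes fam: "is_family (\<Phi>, Z)" and q: "q \<in> Z"
    and defined: "\<And>\<tau>. \<tau> \<in> {0..\<theta>} \<Longrightarrow> \<Phi> \<tau> w q \<noteq> None"
  shows "continuous_on {0..\<theta>} (\<lambda>\<tau>. the (\<Phi> \<tau> w q))"
  unfolding continuous_on_iff
proof (intro ballI allI impI)
  fix \<tau>0 and e :: real assume \<tau>0: "\<tau>0 \<in> {0..\<theta>}" and e: "e > 0"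
  have some: "\<Phi> \<tau>0 w q = Some (the (\<Phi> \<tau>0 w q))"
    using defined[OF \<tau>0] by simp
  have "0 \<le> \<tau>0"
    using \<tau>0 by simp
  then obtain d where d: "d > 0" "\<forall>t'\<ge>0. \<forall>u'. \<forall>p'\<in>Z. \<bar>\<tau>0 - t'\<bar> + dist w u' + dist q p' < d \<longrightarrow>
      (\<exists>x'. \<Phi> t' u' p' = Some x' \<and> dist (the (\<Phi> \<tau>0 w q)) x' < e)"
    using family_continuous[OF fam q _ some e] by blast
  have "dist (the (\<Phi> \<tau> w q)) (the (\<Phi> \<tau>0 w q)) < e" if "\<tau> \<in> {0..\<theta>}" "dist \<tau> \<tau>0 < d" for \<tau>
    using that q d(2)[rule_format, of \<tau> q w] by (auto simp: dist_real_def abs_minus_commute dist_commute)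
  with d(1) show "\<exists>d>0. \<forall>\<tau>\<in>{0..\<theta>}. dist \<tau> \<tau>0 < d \<longrightarrow> dist (the (\<Phi> \<tau> w q)) (the (\<Phi> \<tau>0 w q)) < e"
    by blast
qed

lemma continuous_on_param_seq:
  fixes h :: "'a::metric_space \<Rightarrow> 'a"
  assumes families: "\<FF> \<subseteq> SG"
    and "\<forall>((\<Phi>, Z), s, f)\<in>set L. (\<Phi>, Z) \<in> \<FF> \<and> s > 0 \<and> continuous_on K f \<and> f ` K \<subseteq> Z"
    and "continuous_on K h" and "\<forall>p\<in>K. apply_seq (param_seq L p) (h p) \<noteq> None"
  shows "continuous_on K (\<lambda>p. the (apply_seq (param_seq L p) (h p)))"
  using assms
proof (induction L arbitrary: h)
  case Nil
  then show ?case
    by (simp add: param_seq_def)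
next
  case (Cons a L)
  obtain \<Phi> Z s f where a: "a = ((\<Phi>, Z), s, f)"
    by (metis prod.collapse)
  have "(\<Phi>, Z) \<in> \<FF>" and s: "s > 0" and cf: "continuous_on K f" and fK: "f ` K \<subseteq> Z"
    using Cons.prems(2) by (auto simp: a)
  then have fam: "is_family (\<Phi>, Z)"
    using families by (auto simp: SG_def)
  define h' where "h' p = the (\<Phi> s (h p) (f p))" for p
  have step: "\<Phi> s (h p) (f p) = Some (h' p)" if "p \<in> K" for p
    using Cons.prems(4) that unfolding h'_def by (auto simp: a param_seq_Cons split: option.splits)
  have eq: "apply_seq (param_seq (a # L) p) (h p) = apply_seq (param_seq L p) (h' p)" if "p \<in> K" for p
    using step[OF that] by (simp add: a param_seq_Cons)
  have "continuous_on K h'"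
    unfolding continuous_on_iff
  proof (intro ballI allI impI)
    fix p0 and e :: real assume p0: "p0 \<in> K" and e: "e > 0"
    obtain \<delta> where \<delta>: "\<delta> > 0" "\<forall>t'\<ge>0. \<forall>u'. \<forall>p'\<in>Z. \<bar>s - t'\<bar> + dist (h p0) u' + dist (f p0) p' < \<delta> \<longrightarrow>
        (\<exists>x'. \<Phi> t' u' p' = Some x' \<and> dist (h' p0) x' < e)"
      using family_continuous[OF fam _ _ step[OF p0] e] fK p0 s by fastforce
    obtain d1 where d1: "d1 > 0" "\<forall>p\<in>K. dist p p0 < d1 \<longrightarrow> dist (h p) (h p0) < \<delta>/2"
      using Cons.prems(3) p0 \<delta>(1) unfolding continuous_on_iff by (meson half_gt_zero)
    obtain d2 where d2: "d2 > 0" "\<forall>p\<in>K. dist p p0 < d2 \<longrightarrow> dist (f p) (f p0) < \<delta>/2"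
      using cf p0 \<delta>(1) unfolding continuous_on_iff by (meson half_gt_zero)
    have "dist (h' p) (h' p0) < e" if p: "p \<in> K" "dist p p0 < min d1 d2" for p
    proof -
      have "dist (h p) (h p0) < \<delta>/2" "dist (f p) (f p0) < \<delta>/2"
        using d1(2) d2(2) p by auto
      then have "\<bar>s - s\<bar> + dist (h p0) (h p) + dist (f p0) (f p) < \<delta>"
        by (simp add: dist_commute)
      then obtain x' where "\<Phi> s (h p) (f p) = Some x'" "dist (h' p0) x' < e"
        using \<delta>(2)[rule_format, of s "f p" "h p"] s fK p(1) by auto
      then show ?thesis
        using step[OF p(1)] by (simp add: dist_commute)
    qed
    with d1(1) d2(1) show "\<exists>d>0. \<forall>p\<in>K. dist p p0 < d \<longrightarrow> dist (h' p) (h' p0) < e"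
      by (intro exI[of _ "min d1 d2"]) auto
  qed
  then have "continuous_on K (\<lambda>p. the (apply_seq (param_seq L p) (h' p)))"
    using Cons.IH[OF families] Cons.prems(2,4) eq by (auto simp: a)
  then show ?case
    by (rule continuous_on_eq) (simp add: eq)
qed

section \<open>Consequences of ray saturation\<close>

lemma usubD:
  fixes \<FF> :: "'a::metric_space family set"
  assumes "usub \<GG> \<FF>" "(\<Psi>, Z\<Psi>) \<in> \<GG>" "t > 0" "\<epsilon> > 0" "compact K1" "compact K2" "K2 \<subseteq> Z\<Psi>"
  shows "\<exists>L. admissible_params \<FF> K2 L \<and> param_time L \<le> t \<and>
    (\<exists>c<\<epsilon>. \<forall>u\<in>K1. \<forall>p\<in>K2. \<exists>x w. \<Psi> t u p = Some x \<and> apply_seq (param_seq L p) u = Some w \<and> dist x w \<le> c)"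
proof -
  have "\<forall>t>0. \<forall>\<epsilon>>0. \<forall>K1 K2. compact K1 \<and> compact K2 \<and> K2 \<subseteq> Z\<Psi> \<longrightarrow>
      (\<exists>L :: ('a family \<times> real \<times> ('a \<Rightarrow> 'a)) list. L \<noteq> [] \<and>
         (\<forall>((\<Phi>, Z), s, f)\<in>set L. (\<Phi>, Z) \<in> \<FF> \<and> s > 0 \<and> continuous_on K2 f \<and> f ` K2 \<subseteq> Z) \<and>
         param_time L \<le> t \<and>
         (\<exists>c<\<epsilon>. \<forall>u\<in>K1. \<forall>p\<in>K2. \<exists>x w. \<Psi> t u p = Some x \<and>
            apply_seq (param_seq L p) u = Some w \<and> dist x w \<le> c))"
    using bspec[OF assms(1)[unfolded usub_def] assms(2)] unfolding param_seq_def param_time_def by simp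
  from this[rule_format, OF assms(3,4) conjI[OF assms(5) conjI[OF assms(6,7)]]] show ?thesis
    unfolding admissible_params_def by (elim exE conjE) (intro exI conjI)
qed

locale ray_saturated =
  fixes \<FF> :: "'a::{real_vector, complete_space} family set" and Xs :: "nat \<Rightarrow> 'a set"
  assumes frechet: "frechet_space TYPE('a)"
    and families: "\<FF> \<subseteq> SG"
    and Xs_mono: "\<And>n. Xs n \<subseteq> Xs (Suc n)"
    and Xs_subspace: "\<And>n. subspace (Xs n)"
    and ray_saturated: "\<And>n. ray (Xs n) \<in> Sat_u \<FF>"
    and Xs_dense: "closure (\<Union>n. Xs n) = UNIV"
begin

lemma ray_approx:
  assumes "s > 0" "e > 0" "compact K1" "compact K2" "K2 \<subseteq> Xs n"
  shows "\<exists>L. admissible_params \<FF> K2 L \<and> param_time L \<le> s \<and>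
    (\<forall>u\<in>K1. \<forall>p\<in>K2. \<exists>w. apply_seq (param_seq L p) u = Some w \<and> dist (u + s *\<^sub>R p) w < e)"
proof -
  obtain \<GG> where \<GG>: "usub \<GG> \<FF>" "ray (Xs n) \<in> \<GG>"
    using ray_saturated[of n] unfolding Sat_u_def by blast
  have "(fst (ray (Xs n)), Xs n) \<in> \<GG>"
    using \<GG>(2) by (simp add: ray_def)
  from usubD[OF \<GG>(1) this assms] obtain L c
    where L: "admissible_params \<FF> K2 L" "param_time L \<le> s" and c: "c < e"
      and near: "\<forall>u\<in>K1. \<forall>p\<in>K2. \<exists>x w. fst (ray (Xs n)) s u p = Some x \<and>
          apply_seq (param_seq L p) u = Some w \<and> dist x w \<le> c"
    by (elim exE conjE)
  have "\<exists>w. apply_seq (param_seq L p) u = Some w \<and> dist (u + s *\<^sub>R p) w < e" if up: "u \<in> K1" "p \<in> K2" for u p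
  proof -
    obtain x w where "fst (ray (Xs n)) s u p = Some x" "apply_seq (param_seq L p) u = Some w" "dist x w \<le> c"
      using near up by blast
    moreover have "fst (ray (Xs n)) s u p = Some (u + s *\<^sub>R p)"
      using up(2) assms(1,5) by (auto simp: ray_def)
    ultimately show ?thesis
      using c by auto
  qed
  with L show ?thesis
    by blast
qed

lemma exists_family: "\<exists>\<Phi> Z. (\<Phi>, Z) \<in> \<FF> \<and> Z \<noteq> {}"
proof -
  have "{0} \<subseteq> Xs 0"
    using Xs_subspace[of 0] by (simp add: subspace_0)
  from ray_approx[OF zero_less_one zero_less_one compact_sing[of 0] compact_sing[of 0] this]
  obtain L where "admissible_params \<FF> {0} L"
    by blast
  then show ?thesis
    by (rule admissible_params_nonempty) simp
qed

lemma attainable_near: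
  assumes "s > 0" "\<eta> > 0"
  shows "\<exists>s'\<le>s. \<exists>w'\<in>attainable (DD \<FF>) w s'. dist w' v < \<eta>"
proof -
  have "v - w \<in> closure (\<Union>n. Xs n)"
    using Xs_dense by simp
  then obtain y where "y \<in> (\<Union>n. Xs n)" "dist y (v - w) < \<eta>/2"
    using assms(2) unfolding closure_approachable by (meson half_gt_zero)
  then obtain n where y: "y \<in> Xs n" "dist y (v - w) < \<eta>/2"
    by blast
  define p where "p = (1/s) *\<^sub>R y"
  have p: "p \<in> Xs n" "s *\<^sub>R p = y"
    using Xs_subspace[of n] y(1) assms(1) by (simp_all add: p_def subspace_scale)
  then have "{p} \<subseteq> Xs n"
    by simp
  from ray_approx[OF assms(1) half_gt_zero[OF assms(2)] compact_sing[of w] compact_sing[of p] this]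
  obtain L where L: "admissible_params \<FF> {p} L" "param_time L \<le> s"
    and near: "\<forall>u\<in>{w}. \<forall>p'\<in>{p}. \<exists>w'. apply_seq (param_seq L p') u = Some w' \<and> dist (u + s *\<^sub>R p') w' < \<eta>/2"
    by blast
  obtain w' where w': "apply_seq (param_seq L p) w = Some w'" "dist (w + s *\<^sub>R p) w' < \<eta>/2"
    using near by blast
  have "w' \<in> attainable (DD \<FF>) w (param_time L)"
    using param_seq_attainable[OF L(1) _ w'(1)] by simp
  moreover have "dist (w + y) v = dist y (v - w)"
    using frechet_dist_translate[OF frechet, of y w "v - w"] by (simp add: add.commute)
  then have "dist w' v < \<eta>"
    using w'(2) y(2) p(2) dist_triangle[of w' v "w + y"] by (simp add: dist_commute)
  ultimately show ?thesis
    using L(2) by blast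
qed

end

lemma param_time_pos: "admissible_params \<FF> K L \<Longrightarrow> param_time L > 0"
  unfolding admissible_params_def param_time_def
  by (intro sum_list_pos) auto

context ray_saturated
begin

lemma attainable_within_steps:
  assumes \<Psi>: "\<Psi> \<in> DD \<FF>" and h: "h > 0"
    and start: "\<And>t w. 0 \<le> t \<Longrightarrow> t + dist w v < 2 * h \<Longrightarrow> \<exists>x. \<Psi> t w = Some x \<and> dist x v < \<eta>"
  shows "dist w v < h \<Longrightarrow> 0 < T \<Longrightarrow> T \<le> real k * (h / 2) \<Longrightarrow>
    \<exists>w'\<in>attainable (DD \<FF>) w T. dist w' v < \<eta>"
proof (induction k arbitrary: w T)
  case 0
  then show ?case
    by simp
next
  case (Suc k)
  show ?case
  proof (cases "T \<le> h")
    case True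
    then obtain x where "\<Psi> T w = Some x" "dist x v < \<eta>"
      using start[of T w] Suc.prems by auto
    then show ?thesis
      using attainable_single[OF \<Psi> Suc.prems(2)] by blast
  next
    case False
    obtain w1 where w1: "\<Psi> (h/2) w = Some w1"
      using start[of "h/2" w] Suc.prems(1) h by auto
    obtain \<sigma> w2 where \<sigma>: "\<sigma> \<le> h/2" and w2: "w2 \<in> attainable (DD \<FF>) w1 \<sigma>" "dist w2 v < h"
      using attainable_near[of "h/2" h w1 v] h by auto
    have "\<sigma> > 0"
      by (rule attainable_time_pos[OF w2(1)])
    define T' where "T' = T - h/2 - \<sigma>"
    have "0 < T'" "T' \<le> real k * (h/2)"
      using False Suc.prems(3) \<sigma> \<open>\<sigma> > 0\<close> by (auto simp: T'_def algebra_simps)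
    then obtain w3 where w3: "w3 \<in> attainable (DD \<FF>) w2 T'" "dist w3 v < \<eta>"
      using Suc.IH w2(2) by blast
    have "w3 \<in> attainable (DD \<FF>) w (h/2 + \<sigma> + T')"
      using h by (intro attainable_trans[OF attainable_trans[OF attainable_single[OF \<Psi> _ w1] w2(1)] w3(1)]) simp
    then show ?thesis
      using w3(2) by (auto simp: T'_def)
  qed
qed

lemma family_semigroup:
  obtains \<Phi> Z q where "is_family (\<Phi>, Z)" "q \<in> Z" "(\<lambda>t u. \<Phi> t u q) \<in> DD \<FF>"
proof -
  obtain \<Phi> Z where "(\<Phi>, Z) \<in> \<FF>" "Z \<noteq> {}"
    using exists_family by blast
  moreover from this obtain q where "q \<in> Z"
    by blast
  moreover have "is_family (\<Phi>, Z)"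
    using calculation(1) families by (auto simp: SG_def)
  ultimately show thesis
    using that unfolding DD_def by blast
qed

lemma attainable_dense:
  assumes "t > 0" "\<eta> > 0"
  shows "\<exists>w\<in>attainable (DD \<FF>) u t. dist w v < \<eta>"
proof -
  obtain \<Phi> Z q where fam: "is_family (\<Phi>, Z)" and q: "q \<in> Z" and \<Psi>: "(\<lambda>t u. \<Phi> t u q) \<in> DD \<FF>"
    by (rule family_semigroup)
  obtain \<delta> where \<delta>: "\<delta> > 0" "\<forall>t w. 0 \<le> t \<and> t + dist w v < \<delta> \<longrightarrow> (\<exists>x. \<Phi> t w q = Some x \<and> dist x v < \<eta>)"
    using family_near_start[OF fam q assms(2)] by blast
  define h where "h = \<delta>/2"
  have h: "h > 0" "2 * h = \<delta>"
    using \<delta>(1) by (simp_all add: h_def)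
  obtain \<sigma> w1 where \<sigma>: "\<sigma> \<le> t/2" and w1: "w1 \<in> attainable (DD \<FF>) u \<sigma>" "dist w1 v < h"
    using attainable_near[of "t/2" h u v] assms h by auto
  have "\<sigma> > 0"
    by (rule attainable_time_pos[OF w1(1)])
  obtain k :: nat where "(t - \<sigma>) / (h/2) \<le> real k"
    using real_arch_simple by blast
  then have "t - \<sigma> \<le> real k * (h/2)"
    using h by (simp add: divide_le_eq)
  moreover have "t - \<sigma> > 0"
    using \<sigma> assms(1) by simp
  ultimately obtain w2 where w2: "w2 \<in> attainable (DD \<FF>) w1 (t - \<sigma>)" "dist w2 v < \<eta>"
    using attainable_within_steps[OF \<Psi> h(1), of v \<eta> w1 "t - \<sigma>" k] \<delta>(2) h(2) w1(2) by auto
  have "w2 \<in> attainable (DD \<FF>) u (\<sigma> + (t - \<sigma>))"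
    by (rule attainable_trans[OF w1(1) w2(1)])
  with w2(2) show ?thesis
    by auto
qed

text \<open>A compact family of near-targets that can be reached at any time in [t - s, t): the
  slack absorbs the unknown total time of the parameter-dependent controls applied afterwards.\<close>
lemma attainable_compact_delay:
  assumes "t > 0" "\<eta> > 0"
  shows "\<exists>s>0. s < t \<and> (\<exists>K. compact K \<and> (\<forall>w\<in>K. dist w v < \<eta>) \<and>
    (\<forall>\<sigma>. 0 < \<sigma> \<and> \<sigma> \<le> s \<longrightarrow> (\<exists>w\<in>K. w \<in> attainable (DD \<FF>) u (t - \<sigma>))))"
proof -
  obtain \<Phi> Z q where fam: "is_family (\<Phi>, Z)" and q: "q \<in> Z" and \<Psi>: "(\<lambda>t u. \<Phi> t u q) \<in> DD \<FF>"
    by (rule family_semigroup)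
  obtain \<delta> where \<delta>: "\<delta> > 0" "\<forall>t w. 0 \<le> t \<and> t + dist w v < \<delta> \<longrightarrow> (\<exists>x. \<Phi> t w q = Some x \<and> dist x v < \<eta>)"
    using family_near_start[OF fam q assms(2)] by blast
  define \<theta> where "\<theta> = min t \<delta> / 2"
  have \<theta>: "0 < \<theta>" "\<theta> < t" "\<theta> \<le> \<delta>/2"
    using assms(1) \<delta>(1) by (auto simp: \<theta>_def)
  obtain wp where wp: "wp \<in> attainable (DD \<FF>) u (t - \<theta>)" "dist wp v < \<delta>/2"
    using attainable_dense[of "t - \<theta>" "\<delta>/2" u v] \<theta>(2) \<delta>(1) by auto
  have orbit: "\<exists>x. \<Phi> \<tau> wp q = Some x \<and> dist x v < \<eta>" if "\<tau> \<in> {0..\<theta>}" for \<tau>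
    using that \<theta>(3) wp(2) \<delta>(2) by auto
  define K where "K = (\<lambda>\<tau>. the (\<Phi> \<tau> wp q)) ` {0..\<theta>}"
  have "compact K"
    unfolding K_def using orbit
    by (intro compact_continuous_image compact_Icc continuous_on_family_orbit[OF fam q]) fastforce
  moreover have "\<forall>w\<in>K. dist w v < \<eta>"
    unfolding K_def using orbit by fastforce
  moreover have "\<exists>w\<in>K. w \<in> attainable (DD \<FF>) u (t - \<sigma>)" if "0 < \<sigma>" "\<sigma> \<le> \<theta>/2" for \<sigma>
  proof -
    have \<tau>: "\<theta> - \<sigma> \<in> {0..\<theta>}" "\<theta> - \<sigma> > 0"
      using that \<theta>(1) by auto
    then obtain x where x: "\<Phi> (\<theta> - \<sigma>) wp q = Some x"
      using orbit by blast
    then have "x \<in> attainable (DD \<FF>) u (t - \<theta> + (\<theta> - \<sigma>))"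
      by (intro attainable_trans[OF wp(1)] attainable_single[OF \<Psi> \<tau>(2)])
    moreover have "x \<in> K"
      unfolding K_def using \<tau>(1) x by (metis image_eqI option.sel)
    ultimately show ?thesis
      by auto
  qed
  ultimately show ?thesis
    using \<theta> by (intro exI[of _ "\<theta>/2"]) auto
qed

lemma approx_in_Xs:
  fixes b :: "nat \<Rightarrow> 'a"
  assumes "\<eta> > 0"
  shows "\<exists>N e. (\<forall>i<m. e i \<in> Xs N) \<and>
    (\<forall>x. (\<forall>i<m. \<bar>x i\<bar> \<le> 1) \<longrightarrow> dist (\<Sum>i<m. x i *\<^sub>R e i) (\<Sum>i<m. x i *\<^sub>R b i) < \<eta>)"
proof -
  obtain \<rho> where \<rho>: "\<rho> > 0" "\<forall>d x. (\<forall>i<m. dist (d i) 0 < \<rho>) \<longrightarrow> (\<forall>i<m. \<bar>x i\<bar> \<le> 1) \<longrightarrow>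
      dist (\<Sum>i<m. x i *\<^sub>R d i) (0::'a) < \<eta>"
    using frechet_small_sum_scaleR[OF frechet assms, of m] by blast
  have "\<exists>y n. y \<in> Xs n \<and> dist y (b i) < \<rho>" for i
  proof -
    have "b i \<in> closure (\<Union>n. Xs n)"
      using Xs_dense by simp
    then obtain y where "y \<in> (\<Union>n. Xs n)" "dist y (b i) < \<rho>"
      using \<rho>(1) unfolding closure_approachable by blast
    then show ?thesis
      by blast
  qed
  then obtain e :: "nat \<Rightarrow> 'a" and n :: "nat \<Rightarrow> nat" where e: "\<And>i. e i \<in> Xs (n i)" "\<And>i. dist (e i) (b i) < \<rho>"
    by metis
  define N where "N = Max (n ` {..<m})"
  have "e i \<in> Xs N" if "i < m" for i
    using e(1)[of i] lift_Suc_mono_le[of Xs, OF Xs_mono, of "n i" N] that by (auto simp: N_def)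
  moreover have "dist (\<Sum>i<m. x i *\<^sub>R e i) (\<Sum>i<m. x i *\<^sub>R b i) < \<eta>" if "\<forall>i<m. \<bar>x i\<bar> \<le> 1" for x
  proof -
    have "\<forall>i<m. dist (e i - b i) 0 < \<rho>"
      using e(2) frechet_dist_diff[OF frechet] by metis
    then have "dist (\<Sum>i<m. x i *\<^sub>R (e i - b i)) 0 < \<eta>"
      using \<rho>(2)[rule_format, of "\<lambda>i. e i - b i" x] that by simp
    then show ?thesis
      using frechet_dist_diff[OF frechet]
      by (simp add: scaleR_diff_right sum_subtractf)
  qed
  ultimately show ?thesis
    by blast
qed

lemma continuous_attainable_near_lincomb:
  fixes b :: "nat \<Rightarrow> 'a" and D :: "(nat \<Rightarrow> real) set"
  assumes D: "compact D" "\<forall>x\<in>D. \<forall>i<m. \<bar>x i\<bar> \<le> 1" and t: "t > 0" and \<eta>: "\<eta> > 0"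
  shows "\<exists>H. continuous_on D H \<and>
    (\<forall>x\<in>D. H x \<in> attainable (DD \<FF>) u t \<and> dist (H x) (v + (\<Sum>i<m. x i *\<^sub>R b i)) < \<eta>)"
proof -
  obtain s K where s: "0 < s" "s < t" and K: "compact K" "\<forall>w\<in>K. dist w v < \<eta>/3"
    and reach: "\<forall>\<sigma>. 0 < \<sigma> \<and> \<sigma> \<le> s \<longrightarrow> (\<exists>w\<in>K. w \<in> attainable (DD \<FF>) u (t - \<sigma>))"
    using attainable_compact_delay[OF t, of "\<eta>/3" v u] \<eta> by auto
  obtain N e where e: "\<forall>i<m. e i \<in> Xs N"
    "\<forall>x. (\<forall>i<m. \<bar>x i\<bar> \<le> 1) \<longrightarrow> dist (\<Sum>i<m. x i *\<^sub>R e i) (\<Sum>i<m. x i *\<^sub>R b i) < \<eta>/3"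
    using approx_in_Xs[where b = b and m = m and \<eta> = "\<eta>/3"] \<eta> by auto
  define P where "P x = (1/s) *\<^sub>R (\<Sum>i<m. x i *\<^sub>R e i)" for x :: "nat \<Rightarrow> real"
  have cont_P: "continuous_on D P"
    unfolding P_def
    by (intro frechet_continuous_on_scaleR[OF frechet] frechet_continuous_on_sum[OF frechet]
        continuous_on_component continuous_on_const)
  have "P ` D \<subseteq> Xs N"
    using e(1) Xs_subspace[of N] unfolding P_def by (auto intro!: subspace_scale subspace_sum)
  from ray_approx[OF s(1) _ K(1) compact_continuous_image[OF cont_P D(1)] this, of "\<eta>/3"] \<eta>
  obtain L where L: "admissible_params \<FF> (P ` D) L" "param_time L \<le> s"
    and near: "\<forall>w\<in>K. \<forall>p\<in>P ` D. \<exists>w'. apply_seq (param_seq L p) w = Some w' \<and> dist (w + s *\<^sub>R p) w' < \<eta>/3"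
    by auto
  have "0 < param_time L \<and> param_time L \<le> s"
    using param_time_pos[OF L(1)] L(2) by simp
  then obtain w0 where w0: "w0 \<in> K" "w0 \<in> attainable (DD \<FF>) u (t - param_time L)"
    using reach by blast
  define H where "H x = the (apply_seq (param_seq L (P x)) w0)" for x
  have H: "apply_seq (param_seq L (P x)) w0 = Some (H x)" "dist (w0 + s *\<^sub>R P x) (H x) < \<eta>/3"
    if "x \<in> D" for x
  proof -
    have "P x \<in> P ` D"
      using that by (rule imageI)
    then obtain w' where "apply_seq (param_seq L (P x)) w0 = Some w'" "dist (w0 + s *\<^sub>R P x) w' < \<eta>/3"
      using near w0(1) by blast
    then show "apply_seq (param_seq L (P x)) w0 = Some (H x)" "dist (w0 + s *\<^sub>R P x) (H x) < \<eta>/3"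
      by (simp_all add: H_def)
  qed
  have "continuous_on (P ` D) (\<lambda>p. the (apply_seq (param_seq L p) w0))"
    using continuous_on_param_seq[OF families conjunct2[OF L(1)[unfolded admissible_params_def]]
        continuous_on_const[of "P ` D" w0]] H(1) by auto
  then have "continuous_on D H"
    unfolding H_def by (rule continuous_on_compose2[OF _ cont_P]) auto
  moreover have "H x \<in> attainable (DD \<FF>) u t" if "x \<in> D" for x
    using attainable_trans[OF w0(2) param_seq_attainable[OF L(1) _ H(1)[OF that]]] that by simp
  moreover have "dist (H x) (v + (\<Sum>i<m. x i *\<^sub>R b i)) < \<eta>" if "x \<in> D" for x
  proof -
    have "s *\<^sub>R P x = (\<Sum>i<m. x i *\<^sub>R e i)"
      using s(1) by (simp add: P_def)
    then have "dist (H x) (w0 + (\<Sum>i<m. x i *\<^sub>R e i)) < \<eta>/3"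
      using H(2)[OF that] by (simp add: dist_commute)
    moreover have "dist (w0 + (\<Sum>i<m. x i *\<^sub>R e i)) (v + (\<Sum>i<m. x i *\<^sub>R b i))
        \<le> dist w0 v + dist (\<Sum>i<m. x i *\<^sub>R e i) (\<Sum>i<m. x i *\<^sub>R b i)"
      by (rule frechet_dist_add_le[OF frechet])
    moreover have "dist w0 v < \<eta>/3"
      using K(2) w0(1) by blast
    moreover have "dist (\<Sum>i<m. x i *\<^sub>R e i) (\<Sum>i<m. x i *\<^sub>R b i) < \<eta>/3"
      using e(2) D(2) that by blast
    ultimately show ?thesis
      using dist_triangle[of "H x" "v + (\<Sum>i<m. x i *\<^sub>R b i)" "w0 + (\<Sum>i<m. x i *\<^sub>R e i)"] by linarith
  qed
  ultimately show ?thesis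
    by blast
qed

end

section \<open>Projections onto finite-dimensional subspaces\<close>

lemma (in finite_coordinates) projection_correction:
  fixes \<pi> :: "'a \<Rightarrow> 'a"
  assumes lin: "linear \<pi>" and cont: "continuous_on UNIV \<pi>" and idem: "\<And>x. \<pi> (\<pi> x) = \<pi> x"
    and range: "range \<pi> = span B" and \<epsilon>: "\<epsilon> > 0"
  shows "\<exists>r>0. r \<le> 1 \<and> (\<exists>\<eta>>0. \<forall>v H. continuous_on (coord_cball m r) H \<and>
    (\<forall>x\<in>coord_cball m r. dist (H x) (v + lincomb x) < \<eta>) \<longrightarrow>
    (\<exists>x\<in>coord_cball m r. \<pi> (H x) = \<pi> v \<and> dist (H x) v < \<epsilon>))"
proof -
  obtain r where r: "r > 0" "r \<le> 1" "\<forall>x. (\<forall>i<m. \<bar>x i\<bar> \<le> r) \<longrightarrow> dist (lincomb x) 0 < \<epsilon>/2"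
    using small_lincomb[of "\<epsilon>/2"] \<epsilon> by auto
  obtain \<gamma> where \<gamma>: "\<gamma> > 0" "\<forall>y\<in>span B. dist y 0 < \<gamma> \<longrightarrow> L2_set (coord y) {..<m} < r"
    using small_coord[OF r(1)] by blast
  have "\<pi> 0 = 0"
    using lin by (rule linear_0)
  then obtain \<delta> where \<delta>: "\<delta> > 0" "\<forall>y. dist y 0 < \<delta> \<longrightarrow> dist (\<pi> y) 0 < \<gamma>"
    using cont \<gamma>(1) unfolding continuous_on_iff by (metis UNIV_I)
  have \<pi>_span: "\<pi> y = y" if "y \<in> span B" for y
    using that idem range by (metis rangeE)
  have "\<exists>x\<in>coord_cball m r. \<pi> (H x) = \<pi> v \<and> dist (H x) v < \<epsilon>"
    if H: "continuous_on (coord_cball m r) H" "\<forall>x\<in>coord_cball m r. dist (H x) (v + lincomb x) < min \<delta> (\<epsilon>/2)"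
    for v H
  proof -
    define G where "G x = \<pi> (H x) - \<pi> v" for x
    have G_span: "G x \<in> span B" for x
      unfolding G_def using range by (metis rangeI span_diff)
    have "continuous_on (coord_cball m r) (\<lambda>x. \<pi> (H x))"
      using continuous_on_compose2[OF cont H(1)] by simp
    then have "continuous_on (coord_cball m r) G"
      unfolding G_def by (intro frechet_continuous_on_diff[OF frechet] continuous_on_const)
    moreover have "L2_set (coord (G x - lincomb x)) {..<m} < r" if x: "x \<in> coord_cball m r" for x
    proof -
      have "dist (H x) (v + lincomb x) < \<delta>"
        using H(2) x by simp
      then have "dist (H x - v - lincomb x) 0 < \<delta>"
        using frechet_dist_diff[OF frechet, of "H x" "v + lincomb x"] by (simp add: diff_diff_eq)
      moreover have "G x - lincomb x = \<pi> (H x - v - lincomb x)"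
        using \<pi>_span[OF lincomb_in_span] lin unfolding G_def by (simp add: linear_diff)
      ultimately have "dist (G x - lincomb x) 0 < \<gamma>"
        using \<delta>(2) by simp
      moreover have "G x - lincomb x \<in> span B"
        by (intro span_diff G_span lincomb_in_span)
      ultimately show ?thesis
        using \<gamma>(2) by blast
    qed
    ultimately obtain x where x: "x \<in> coord_cball m r" "G x = 0"
      using exists_zero_near_lincomb[OF r(1)] G_span by blast
    have "dist (v + lincomb x) v = dist (lincomb x) 0"
      using frechet_dist_translate[OF frechet, of "lincomb x" v 0] by (simp add: add.commute)
    also have "\<dots> < \<epsilon>/2"
      using r(3) coord_cball_abs_le[OF x(1)] by blast
    finally have "dist (H x) v < \<epsilon>"
      using H(2) x(1) dist_triangle[of "H x" v "v + lincomb x"] by fastforce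
    with x show ?thesis
      by (auto simp: G_def)
  qed
  with r(1,2) \<delta>(1) \<epsilon> show ?thesis
    by (intro exI[of _ r] conjI exI[of _ "min \<delta> (\<epsilon>/2)"]) auto
qed

lemma exists_finite_coordinates:
  fixes B0 :: "'a::{real_vector, complete_space} set"
  assumes "frechet_space TYPE('a)" "finite B0"
  shows "\<exists>B m b. finite_coordinates B m b \<and> span B = span B0"
proof -
  obtain B where B: "B \<subseteq> span B0" "independent B" "span B0 \<subseteq> span B"
    using maximal_independent_subset[of "span B0"] by blast
  have "finite B"
    using independent_span_bound[OF assms(2) B(2)] B(1) by simp
  then obtain b where "bij_betw b {..<card B} B"
    using ex_bij_betw_nat_finite[of B] by (auto simp: atLeast0LessThan)
  moreover have "span B = span B0"
    using B span_minimal[OF B(1) subspace_span] by blast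
  ultimately show ?thesis
    using assms(1) B(2) unfolding finite_coordinates_def by blast
qed

context ray_saturated
begin

lemma approx_controllable_DD: "approx_controllable (DD \<FF>)"
  unfolding approx_controllable_def
proof (intro allI impI)
  fix u and t :: real assume "t > 0"
  have "v \<in> closure (attainable (DD \<FF>) u t)" for v
    using attainable_dense[OF \<open>t > 0\<close>] unfolding closure_approachable by blast
  then show "closure (attainable (DD \<FF>) u t) = UNIV"
    by blast
qed

lemma attainable_projection:
  fixes \<pi> :: "'a \<Rightarrow> 'a"
  assumes \<pi>: "linear \<pi>" "continuous_on UNIV \<pi>" "\<And>x. \<pi> (\<pi> x) = \<pi> x" "finite B0" "range \<pi> = span B0"
    and t: "t > 0" and \<epsilon>: "\<epsilon> > 0"
  shows "\<exists>w\<in>attainable (DD \<FF>) u t. \<pi> w = \<pi> v \<and> dist w v < \<epsilon>"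
proof -
  obtain B m b where coordinates: "finite_coordinates B m b" and range: "range \<pi> = span B"
    using exists_finite_coordinates[OF frechet \<pi>(4)] \<pi>(5) by metis
  interpret finite_coordinates B m b
    by (rule coordinates)
  obtain r \<eta> where r: "r > 0" "r \<le> 1" "\<eta> > 0" and correction: "\<forall>v H. continuous_on (coord_cball m r) H \<and>
      (\<forall>x\<in>coord_cball m r. dist (H x) (v + lincomb x) < \<eta>) \<longrightarrow>
      (\<exists>x\<in>coord_cball m r. \<pi> (H x) = \<pi> v \<and> dist (H x) v < \<epsilon>)"
    using projection_correction[OF \<pi>(1-3) range \<epsilon>] by blast
  have "\<forall>x\<in>coord_cball m r. \<forall>i<m. \<bar>x i\<bar> \<le> 1"
    using coord_cball_abs_le r(2) by fastforce
  from continuous_attainable_near_lincomb[OF compact_coord_cball this t r(3), of u v b]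
  obtain H where "continuous_on (coord_cball m r) H"
    "\<forall>x\<in>coord_cball m r. H x \<in> attainable (DD \<FF>) u t \<and> dist (H x) (v + lincomb x) < \<eta>"
    unfolding lincomb_def by blast
  with correction show ?thesis
    by blast
qed

end

theorem corollary3p12:
  fixes \<FF> :: "'a::{real_vector, complete_space} family set"
    and Xs :: "nat \<Rightarrow> 'a set"
  assumes "frechet_space TYPE('a)"
    and "\<FF> \<subseteq> SG"
    and "\<And>n. Xs n \<subseteq> Xs (Suc n)"
    and "\<And>n. subspace (Xs n)"
    and "\<And>n. ray (Xs n) \<in> Sat_u \<FF>"
    and "closure (\<Union>n. Xs n) = UNIV"
  shows "approx_controllable (DD \<FF>) \<and>
    (\<forall>\<pi>::'a \<Rightarrow> 'a. linear \<pi> \<and> continuous_on UNIV \<pi> \<and> (\<forall>x. \<pi> (\<pi> x) = \<pi> x) \<and>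
        (\<exists>B. finite B \<and> range \<pi> = span B) \<longrightarrow>
      (\<forall>u v. \<forall>t>0. \<forall>\<epsilon>>0. \<exists>L w. L \<noteq> [] \<and>
          (\<forall>(\<Psi>, s)\<in>set L. \<Psi> \<in> DD \<FF> \<and> s > 0) \<and>
          sum_list (map snd L) = t \<and>
          apply_seq L u = Some w \<and> \<pi> w = \<pi> v \<and> dist w v < \<epsilon>))"
proof -
  interpret ray_saturated \<FF> Xs
    using assms by unfold_locales
  have "\<exists>w\<in>attainable (DD \<FF>) u t. \<pi> w = \<pi> v \<and> dist w v < \<epsilon>"
    if "linear \<pi> \<and> continuous_on UNIV \<pi> \<and> (\<forall>x. \<pi> (\<pi> x) = \<pi> x) \<and> (\<exists>B. finite B \<and> range \<pi> = span B)"
      and "t > 0" "\<epsilon> > 0" for \<pi> :: "'a \<Rightarrow> 'a" and u v :: 'a and t \<epsilon> :: real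
    using that attainable_projection by blast
  then show ?thesis
    using approx_controllable_DD unfolding attainable_def by blast
qed

end
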